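(* Let $L_*\ge3$ and let $\{G_n\}_{n\in\mathbb N}$ be the replacement graphs of the iterated graph system $\mathfrak R(1,L_* )$. Then for every $m>1$, every non-collapsing path in $G_m$ contains at most two distinct vertices.
   Context: Graphs: $(V,E)$, $V$ finite non-empty, $E\subseteq V\times V$, $(x,y)\in E\Rightarrow(y,x)\notin E$; $\{x,y\}\in E$ means either orientation; a path is a sequence $[x_1,\dots,x_k]$ with $\{x_i,x_{i+1}\}\in E$. An iterated graph system consists of a connected graph $G_1=(S,E)$, a finite set $\mathcal T$ of types, a surjective typing $\mathfrak t:E\to\mathcal T$ and non-empty gluing rules $I_t\subseteq S\times S$. With $W_m=S^m$, $[w]_k=w_1\cdots w_k$ and $|w\wedge v|=\min\{k:[w]_k\ne[v]_k\}$ for distinct words of equal length, the replacement graphs $G_m=(W_m,E_m)$ are defined recursively: $(w,v)\in E_{m+1}$ iff either (1) $[w]_m=[v]_m$ and $(w_{m+1},v_{m+1})\in E$ (type $\mathfrak t(w_{m+1},v_{m+1})$), or (2) $([w]_m,[v]_m)\in E_m$ and $(w_{m+1},v_{m+1})\in I_{\mathfrak t([w]_m,[v]_m)}$ (type $\mathfrak t([w]_m,[v]_m)$). The system $\mathfrak R(1,L_* )$ has $S=\{1,\dots,L_*\}$, a single type $t_1$, edges $E=\{(k,k+1):1\le k<L_*\}$ all of type $t_1$, and $I_{t_1}=\{(L_*,1)\}$. For $n>1$, a path $[w^{(1)},\dots,w^{(k)}]$ in $G_n$ is non-collapsing if $|w^{(i)}\wedge w^{(i+1)}|<n$ for all $i=1,\dots,k-1$.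 *)

theory Defs
  imports Main
begin

text \<open>Iterated graph systems. Words of length m over S are lists;
 the prefix [w]_k is take k w.\<close>

definition words :: "'a set \<Rightarrow> nat \<Rightarrow> 'a list set" where
  "words S m = {w. length w = m \<and> set w \<subseteq> S}"

text \<open>Typed edge sets of the replacement graphs G_m (m \<ge> 1):
 a pair ((w,v),t) means (w,v) \<in> E_m and the edge has type t.\<close>

fun typed_edges ::
  "'a set \<Rightarrow> ('a \<times> 'a) set \<Rightarrow> ('a \<times> 'a \<Rightarrow> 't) \<Rightarrow> ('t \<Rightarrow> ('a \<times> 'a) set) \<Rightarrow> nat
     \<Rightarrow> (('a list \<times> 'a list) \<times> 't) set" where
  "typed_edges S E tp I 0 = {}"
| "typed_edges S E tp I (Suc 0) = {(([a], [b]), tp (a, b)) | a b. (a, b) \<in> E}"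
| "typed_edges S E tp I (Suc (Suc m)) =
     {((w @ [a], w @ [b]), tp (a, b)) | w a b. w \<in> words S (Suc m) \<and> (a, b) \<in> E}
   \<union> {((w @ [a], v @ [b]), t) | w v a b t. ((w, v), t) \<in> typed_edges S E tp I (Suc m) \<and> (a, b) \<in> I t}"

definition rep_edges ::
  "'a set \<Rightarrow> ('a \<times> 'a) set \<Rightarrow> ('a \<times> 'a \<Rightarrow> 't) \<Rightarrow> ('t \<Rightarrow> ('a \<times> 'a) set) \<Rightarrow> nat
     \<Rightarrow> ('a list \<times> 'a list) set" where
  "rep_edges S E tp I m = fst ` typed_edges S E tp I m"

definition is_path :: "'v set \<Rightarrow> ('v \<times> 'v) set \<Rightarrow> 'v list \<Rightarrow> bool" where
  "is_path V Ed xs \<longleftrightarrow> xs \<noteq> [] \<and> set xs \<subseteq> V \<and>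
     (\<forall>i. Suc i < length xs \<longrightarrow> ((xs ! i, xs ! Suc i) \<in> Ed \<or> (xs ! Suc i, xs ! i) \<in> Ed))"

definition wedge :: "'a list \<Rightarrow> 'a list \<Rightarrow> nat" where
  "wedge w v = (LEAST k. take k w \<noteq> take k v)"

definition non_collapsing :: "nat \<Rightarrow> 'a list list \<Rightarrow> bool" where
  "non_collapsing n xs \<longleftrightarrow> (\<forall>i. Suc i < length xs \<longrightarrow> wedge (xs ! i) (xs ! Suc i) < n)"

definition R1_S :: "nat \<Rightarrow> nat set" where "R1_S L = {1..L}"
definition R1_E :: "nat \<Rightarrow> (nat \<times> nat) set" where "R1_E L = {(k, k + 1) | k. 1 \<le> k \<and> k < L}"
definition R1_type :: "nat \<times> nat \<Rightarrow> unit" where "R1_type e = ()"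
definition R1_I :: "nat \<Rightarrow> unit \<Rightarrow> (nat \<times> nat) set" where "R1_I L t = {(L, 1)}"

definition R1_W :: "nat \<Rightarrow> nat \<Rightarrow> nat list set" where
  "R1_W L m = words (R1_S L) m"
definition R1_Edges :: "nat \<Rightarrow> nat \<Rightarrow> (nat list \<times> nat list) set" where
  "R1_Edges L m = rep_edges (R1_S L) (R1_E L) R1_type (R1_I L) m"

end

theory Submission
  imports Defs
begin

text \<open>An edge of \<open>G\<^sub>m\<close> (\<open>m \<ge> 2\<close>) between words with a common prefix of
 length \<open>m - 1\<close> is collapsing, so a non-collapsing edge is a gluing edge
 \<open>(w L, v 1)\<close> over an edge \<open>(w, v)\<close> of \<open>G\<^sub>m\<^sub>-\<^sub>1\<close>. In \<open>R(1, L)\<close> every vertex of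
 \<open>G\<^sub>m\<^sub>-\<^sub>1\<close> has at most one out- and at most one in-neighbour, and since \<open>L \<noteq> 1\<close>
 the last letter of a vertex tells at which end of a gluing edge it sits.
 Hence a vertex has at most one non-collapsing neighbour, a non-collapsing
 path can only go back and forth along one edge, and it visits at most two
 vertices.\<close>

lemma wedge_commute: "wedge v w = wedge w v"
  unfolding wedge_def by (rule arg_cong[where f = Least]) auto

lemma wedge_snoc_snoc:
  assumes "a \<noteq> b"
  shows "wedge (w @ [a]) (w @ [b]) = Suc (length w)"
  unfolding wedge_def
proof (rule Least_equality)
  show "take (Suc (length w)) (w @ [a]) \<noteq> take (Suc (length w)) (w @ [b])"
    using assms by simp
next
  fix k
  assume "take k (w @ [a]) \<noteq> take k (w @ [b])"
  then show "Suc (length w) \<le> k"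
    by (cases "k \<le> length w") auto
qed

lemma typed_edges_non_collapsing:
  assumes "irrefl E"
    and "((x, y), t) \<in> typed_edges S E tp I (Suc (Suc k))"
    and "wedge x y < Suc (Suc k)"
  obtains w v a b where "x = w @ [a]" "y = v @ [b]"
    "((w, v), t) \<in> typed_edges S E tp I (Suc k)" "(a, b) \<in> I t"
proof -
  from assms(2) consider
      (inner) w a b where "x = w @ [a]" "y = w @ [b]" "w \<in> words S (Suc k)" "(a, b) \<in> E"
    | (glued) w v a b where "x = w @ [a]" "y = v @ [b]"
        "((w, v), t) \<in> typed_edges S E tp I (Suc k)" "(a, b) \<in> I t"
    by auto
  then show thesis
  proof cases
    case inner
    have "a \<noteq> b"
      using assms(1) inner(4) by (auto simp: irrefl_def)
    then have "wedge x y = Suc (Suc k)"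
      using inner(1-3) wedge_snoc_snoc[of a b w] by (simp add: words_def)
    with assms(3) show thesis by simp
  qed (rule that)
qed

lemma rep_edges_iff:
  "(x, y) \<in> rep_edges S E tp I m \<longleftrightarrow> (\<exists>t. ((x, y), t) \<in> typed_edges S E tp I m)"
  by (force simp: rep_edges_def)

lemma R1_Edges_0: "R1_Edges L 0 = {}"
  by (simp add: R1_Edges_def rep_edges_def)

lemma R1_Edges_1: "R1_Edges L (Suc 0) = {([a], [Suc a]) | a. 1 \<le> a \<and> a < L}"
  by (auto simp: R1_Edges_def rep_edges_def R1_E_def image_iff)

lemma R1_Edges_Suc_Suc:
  "(x, y) \<in> R1_Edges L (Suc (Suc k)) \<longleftrightarrow>
     (\<exists>w a. x = w @ [a] \<and> y = w @ [Suc a] \<and> w \<in> R1_W L (Suc k) \<and> 1 \<le> a \<and> a < L) \<or>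
     (\<exists>w v. x = w @ [L] \<and> y = v @ [1] \<and> (w, v) \<in> R1_Edges L (Suc k))"
  unfolding R1_Edges_def rep_edges_iff typed_edges.simps(3)
  by (auto simp: R1_W_def R1_E_def R1_I_def)

lemma single_valued_R1_Edges:
  "single_valued (R1_Edges L n) \<and> single_valued ((R1_Edges L n)\<inverse>)"
proof (induction n rule: induct_nat_012)
  case (ge2 k)
  then show ?case
    unfolding single_valued_def converse_iff R1_Edges_Suc_Suc by auto
qed (auto simp: R1_Edges_0 R1_Edges_1 single_valued_def)

lemma R1_non_collapsing_edge:
  assumes "(x, y) \<in> R1_Edges L (Suc (Suc k))" and "wedge x y < Suc (Suc k)"
  obtains w v where "x = w @ [L]" "y = v @ [1]" "(w, v) \<in> R1_Edges L (Suc k)"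
proof -
  have "irrefl (R1_E L)"
    by (auto simp: R1_E_def irrefl_def)
  moreover obtain t where
    "((x, y), t) \<in> typed_edges (R1_S L) (R1_E L) R1_type (R1_I L) (Suc (Suc k))"
    using assms(1) by (auto simp: R1_Edges_def rep_edges_iff)
  ultimately obtain w v a b where "x = w @ [a]" "y = v @ [b]" "(a, b) \<in> R1_I L t"
      "((w, v), t) \<in> typed_edges (R1_S L) (R1_E L) R1_type (R1_I L) (Suc k)"
    using assms(2) by (rule typed_edges_non_collapsing)
  then show thesis
    using that by (auto simp: R1_I_def R1_Edges_def rep_edges_iff)
qed

lemma R1_non_collapsing_neighbour:
  assumes "(x, y) \<in> R1_Edges L (Suc (Suc k)) \<or> (y, x) \<in> R1_Edges L (Suc (Suc k))"
    and "wedge x y < Suc (Suc k)"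
  obtains w v where "(w, v) \<in> R1_Edges L (Suc k)"
    "x = w @ [L] \<and> y = v @ [1] \<or> x = v @ [1] \<and> y = w @ [L]"
  using assms(1)
proof
  assume "(x, y) \<in> R1_Edges L (Suc (Suc k))"
  then obtain w v where "x = w @ [L]" "y = v @ [1]" "(w, v) \<in> R1_Edges L (Suc k)"
    using assms(2) by (rule R1_non_collapsing_edge)
  then show thesis
    using that by blast
next
  assume "(y, x) \<in> R1_Edges L (Suc (Suc k))"
  moreover have "wedge y x < Suc (Suc k)"
    using assms(2) by (simp add: wedge_commute)
  ultimately obtain w v where "y = w @ [L]" "x = v @ [1]" "(w, v) \<in> R1_Edges L (Suc k)"
    by (rule R1_non_collapsing_edge)
  then show thesis
    using that by blast
qed

lemma R1_non_collapsing_backtrack: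
  assumes "L \<noteq> 1"
    and "(x, y) \<in> R1_Edges L (Suc (Suc k)) \<or> (y, x) \<in> R1_Edges L (Suc (Suc k))"
    and "wedge x y < Suc (Suc k)"
    and "(y, z) \<in> R1_Edges L (Suc (Suc k)) \<or> (z, y) \<in> R1_Edges L (Suc (Suc k))"
    and "wedge y z < Suc (Suc k)"
  shows "z = x"
proof -
  obtain w v where "(w, v) \<in> R1_Edges L (Suc k)"
      "x = w @ [L] \<and> y = v @ [1] \<or> x = v @ [1] \<and> y = w @ [L]"
    using assms(2,3) by (rule R1_non_collapsing_neighbour)
  moreover obtain w' v' where "(w', v') \<in> R1_Edges L (Suc k)"
      "y = w' @ [L] \<and> z = v' @ [1] \<or> y = v' @ [1] \<and> z = w' @ [L]"
    using assms(4,5) by (rule R1_non_collapsing_neighbour)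
  ultimately show "z = x"
    using assms(1) single_valued_R1_Edges[of L "Suc k"] by (auto simp: single_valued_def)
qed

lemma card_set_le_2_if_2_periodic:
  assumes "\<And>i. Suc (Suc i) < length xs \<Longrightarrow> xs ! Suc (Suc i) = xs ! i"
  shows "card (set xs) \<le> 2"
proof -
  have "xs ! i = xs ! (i mod 2)" if "i < length xs" for i
    using that by (induction i rule: nat_induct2) (auto simp: assms)
  then have "set xs \<subseteq> {xs ! 0, xs ! 1}"
    by (auto simp: in_set_conv_nth mod2_eq_if)
  then have "card (set xs) \<le> card {xs ! 0, xs ! 1}"
    by (rule card_mono[rotated]) simp
  also have "\<dots> \<le> 2"
    by (simp add: card_insert_if)
  finally show ?thesis .
qed

theorem lemma5p6:
  fixes L m :: nat and xs :: "nat list list"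
  assumes "L \<ge> 3" and "m > 1"
    and "is_path (R1_W L m) (R1_Edges L m) xs"
    and "non_collapsing m xs"
  shows "card (set xs) \<le> 2"
proof (rule card_set_le_2_if_2_periodic)
  fix i
  assume i: "Suc (Suc i) < length xs"
  obtain k where m: "m = Suc (Suc k)"
    using less_imp_Suc_add[OF assms(2)] by auto
  show "xs ! Suc (Suc i) = xs ! i"
  proof (rule R1_non_collapsing_backtrack[where y = "xs ! Suc i" and k = k])
    show "L \<noteq> 1"
      using assms(1) by simp
  qed (use assms(3,4) i in \<open>auto simp: is_path_def non_collapsing_def m\<close>)
qed

end
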